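(* Let $X$ be a set with at least three points, let $z_1\ne z_2$ be complex numbers, and let $f:\mathcal{P}(X)\setminus\{\varnothing\}\to\{z_1,z_2\}$ be a surjection such that $f(A)+f(B)=f(A\cup B)$ for all nonempty $A,B\subseteq X$ with $A\cap B=\varnothing$. Then $0\in\{z_1,z_2\}$, the family $f^{-1}(f(X))$ is an ultrafilter on $X$, and $\{\varnothing\}\cup f^{-1}(f(X))$ is a connected door topology on $X$.
   Context: $\mathcal{P}(X)$ denotes the power set of $X$. A topology on $X$ is a connected door topology if every proper nonempty subset of $X$ is either open or closed, but not both. *)

theory Defs
  imports "HOL-Analysis.Analysis"
begin

definition ultrafilter_on :: "'a set \<Rightarrow> 'a set set \<Rightarrow> bool" where
  "ultrafilter_on X U \<longleftrightarrow>
     U \<subseteq> Pow X \<and> X \<in> U \<and> {} \<notin> U \<and>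
     (\<forall>A\<in>U. \<forall>B\<in>U. A \<inter> B \<in> U) \<and>
     (\<forall>A\<in>U. \<forall>B. A \<subseteq> B \<and> B \<subseteq> X \<longrightarrow> B \<in> U) \<and>
     (\<forall>A. A \<subseteq> X \<longrightarrow> A \<in> U \<or> X - A \<in> U)"

definition topology_on :: "'a set \<Rightarrow> 'a set set \<Rightarrow> bool" where
  "topology_on X T \<longleftrightarrow> istopology (\<lambda>S. S \<in> T) \<and> \<Union>T = X"

definition connected_door_topology :: "'a set \<Rightarrow> 'a set set \<Rightarrow> bool" where
  "connected_door_topology X T \<longleftrightarrow> topology_on X T \<and>
     (\<forall>S. S \<subseteq> X \<and> S \<noteq> {} \<and> S \<noteq> X \<longrightarrow> ((S \<in> T) \<noteq> (X - S \<in> T)))"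

end

theory Submission
  imports Defs
begin

text \<open>
  If neither value were 0, three points a, b, c would give a contradiction: additivity puts
  f{a}, f{b}, f{c} and their partial sums into the two-element set, which forces all three
  values to be one and the same t, and then t, t + t, t + t + t would be three distinct
  elements of it. So f takes the values 0 and w \<noteq> 0. Two disjoint nonempty sets never
  both have value w, so a set of value w splits into a part of value w and one of value 0;
  hence f X = w and the sets of value w form an ultrafilter U. Finally, for any ultrafilter a
  proper nonempty subset lies in U exactly when its complement does not, so {{}} \<union> U is a
  connected door topology.
\<close>

definition nonempty_additive :: "'a set \<Rightarrow> ('a set \<Rightarrow> 'b::plus) \<Rightarrow> bool" where
  "nonempty_additive X f \<longleftrightarrow>
     (\<forall>A B. A \<subseteq> X \<longrightarrow> B \<subseteq> X \<longrightarrow> A \<noteq> {} \<longrightarrow> B \<noteq> {} \<longrightarrow> A \<inter> B = {}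
       \<longrightarrow> f (A \<union> B) = f A + f B)"

lemma nonempty_additive_two_valued_contains_zero:
  fixes f :: "'a set \<Rightarrow> 'b::cancel_comm_monoid_add"
  assumes additive: "nonempty_additive X f"
    and three: "a \<in> X" "b \<in> X" "c \<in> X" "a \<noteq> b" "a \<noteq> c" "b \<noteq> c"
    and range: "f ` {A. A \<subseteq> X \<and> A \<noteq> {}} \<subseteq> {u, v}"
    and "u \<noteq> v"
  shows "0 \<in> {u, v}"
proof (rule ccontr)
  assume "0 \<notin> {u, v}"
  \<comment> \<open>if p \<noteq> q then {p, q} = {u, v}, so p + q is p or q and the other summand is 0\<close>
  then have equal: "p = q" if "p \<in> {u, v}" "q \<in> {u, v}" "p + q \<in> {u, v}" for p q
    using that \<open>u \<noteq> v\<close> by auto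
  have in_range: "f A \<in> {u, v}" if "A \<subseteq> X" "A \<noteq> {}" for A
    using range that by blast
  have sum: "f (A \<union> B) = f A + f B"
    if "A \<subseteq> X" "B \<subseteq> X" "A \<noteq> {}" "B \<noteq> {}" "A \<inter> B = {}" for A B
    using additive that unfolding nonempty_additive_def by blast
  have "f {a, b} = f {a} + f {b}" "f {a, c} = f {a} + f {c}" "f {a, b, c} = f {a, b} + f {c}"
    using sum[of "{a}" "{b}"] sum[of "{a}" "{c}"] sum[of "{a, b}" "{c}"] three
    by (auto simp: insert_commute)
  moreover have "f {a} \<in> {u, v}" "f {b} \<in> {u, v}" "f {c} \<in> {u, v}"
    "f {a, b} \<in> {u, v}" "f {a, c} \<in> {u, v}" "f {a, b, c} \<in> {u, v}"
    using in_range three by auto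
  ultimately have "f {b} = f {a}" "f {c} = f {a}" "f {a} + f {a} \<in> {u, v}"
    "f {a} + f {a} + f {a} \<in> {u, v}"
    using equal[of "f {a}" "f {b}"] equal[of "f {a}" "f {c}"] by auto
  moreover have "f {a} \<noteq> 0"
    using \<open>f {a} \<in> {u, v}\<close> \<open>0 \<notin> {u, v}\<close> by auto
  ultimately show False
    using \<open>f {a} \<in> {u, v}\<close> equal[of "f {a}" "f {a} + f {a}"] by auto
qed

lemma nonempty_additive_Diff:
  assumes "nonempty_additive X f" "A \<subseteq> B" "B \<subseteq> X" "A \<noteq> {}" "A \<noteq> B"
  shows "f B = f A + f (B - A)"
proof -
  have "A \<subseteq> X" "B - A \<subseteq> X" "B - A \<noteq> {}" "A \<inter> (B - A) = {}"
    using assms(2,3,5) by auto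
  then have "f (A \<union> (B - A)) = f A + f (B - A)"
    using assms(1,4) unfolding nonempty_additive_def by blast
  moreover have "A \<union> (B - A) = B"
    using assms(2) by blast
  ultimately show ?thesis by simp
qed

lemma two_valued_disjoint_zero:
  fixes f :: "'a set \<Rightarrow> 'b::field_char_0"
  assumes "nonempty_additive X f" "f ` {A. A \<subseteq> X \<and> A \<noteq> {}} \<subseteq> {0, w}" "w \<noteq> 0"
    and "A \<subseteq> X" "B \<subseteq> X" "A \<noteq> {}" "B \<noteq> {}" "A \<inter> B = {}" "f A = w"
  shows "f B = 0"
proof -
  have cases: "f C = 0 \<or> f C = w" if "C \<subseteq> X" "C \<noteq> {}" for C
    using assms(2) that by blast
  have "f (A \<union> B) = w + f B"
    using assms(1,4-9) unfolding nonempty_additive_def by simp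
  then show ?thesis
    using cases[of "A \<union> B"] cases[of B] assms(3-7) by auto
qed

lemma ultrafilter_on_two_valued:
  fixes f :: "'a set \<Rightarrow> 'b::field_char_0"
  assumes additive: "nonempty_additive X f"
    and range: "f ` {A. A \<subseteq> X \<and> A \<noteq> {}} = {0, w}" and "w \<noteq> 0"
  shows "f X = w" and "ultrafilter_on X {A. A \<subseteq> X \<and> A \<noteq> {} \<and> f A = w}"
proof -
  note disjoint = two_valued_disjoint_zero[OF additive equalityD1[OF range] \<open>w \<noteq> 0\<close>]
  note split = nonempty_additive_Diff[OF additive]
  have cases: "f A = 0 \<or> f A = w" if "A \<subseteq> X" "A \<noteq> {}" for A
    using range that by blast
  have mono: "f B = w" if "A \<subseteq> B" "B \<subseteq> X" "A \<noteq> {}" "f A = w" for A B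
  proof (cases "A = B")
    case False
    then have "f (B - A) = 0"
      using disjoint[of A "B - A"] that by auto
    then show ?thesis using split[OF that(1-3) False] that(4) by simp
  qed (use that in simp)
  have "w \<in> f ` {A. A \<subseteq> X \<and> A \<noteq> {}}"
    using range by simp
  then obtain S where "S \<subseteq> X" "S \<noteq> {}" "f S = w"
    by blast
  then show fX: "f X = w"
    using mono by blast
  show "ultrafilter_on X {A. A \<subseteq> X \<and> A \<noteq> {} \<and> f A = w}" (is "ultrafilter_on X ?U")
    unfolding ultrafilter_on_def
  proof (intro conjI ballI allI impI)
    show "?U \<subseteq> Pow X" "X \<in> ?U" "{} \<notin> ?U"
      using fX \<open>S \<subseteq> X\<close> \<open>S \<noteq> {}\<close> by auto
    show "B \<in> ?U" if "A \<in> ?U" "A \<subseteq> B \<and> B \<subseteq> X" for A B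
      using that mono[of A B] by blast
    show "A \<inter> B \<in> ?U" if "A \<in> ?U" "B \<in> ?U" for A B
    proof -
      have ne: "A \<inter> B \<noteq> {}"
        using that disjoint[of A B] \<open>w \<noteq> 0\<close> by auto
      have "f (A \<inter> B) = w"
      proof (cases "A \<inter> B = A")
        case False
        then have "f (A - B) = 0"
          using that disjoint[of B "A - B"] by auto
        moreover have "A - A \<inter> B = A - B" by blast
        ultimately show ?thesis
          using split[of "A \<inter> B" A] that ne False by auto
      qed (use that in simp)
      then show ?thesis using that ne by auto
    qed
    show "C \<in> ?U \<or> X - C \<in> ?U" if "C \<subseteq> X" for C
    proof (cases "C = {} \<or> C = X")
      case False
      then have "f C = w \<longleftrightarrow> f (X - C) \<noteq> w"
        using split[of C X] that cases[of C] cases[of "X - C"] fX \<open>w \<noteq> 0\<close> by auto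
      then show ?thesis using that False by auto
    qed (use fX \<open>S \<subseteq> X\<close> \<open>S \<noteq> {}\<close> in auto)
  qed
qed

lemma ultrafilter_on_imp_connected_door_topology:
  assumes "ultrafilter_on X U"
  shows "connected_door_topology X ({{}} \<union> U)"
proof -
  have sub: "U \<subseteq> Pow X" and X: "X \<in> U" and empty: "{} \<notin> U"
    using assms by (simp_all add: ultrafilter_on_def)
  have Int_closed: "\<And>A B. A \<in> U \<Longrightarrow> B \<in> U \<Longrightarrow> A \<inter> B \<in> U"
    and upward: "\<And>A B. A \<in> U \<Longrightarrow> A \<subseteq> B \<Longrightarrow> B \<subseteq> X \<Longrightarrow> B \<in> U"
    and compl: "\<And>A. A \<subseteq> X \<Longrightarrow> A \<in> U \<or> X - A \<in> U"
    using assms unfolding ultrafilter_on_def by blast+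
  have Union_closed: "\<Union>K \<in> {{}} \<union> U" if "K \<subseteq> {{}} \<union> U" for K
  proof (cases "K \<inter> U = {}")
    case True
    with that have "\<Union>K = {}" by blast
    then show ?thesis by simp
  next
    case False
    then obtain k where "k \<in> K" "k \<in> U" by blast
    moreover have "\<Union>K \<subseteq> X" using that sub by blast
    ultimately show ?thesis using upward[of k "\<Union>K"] by blast
  qed
  have "istopology (\<lambda>S. S \<in> {{}} \<union> U)"
    unfolding istopology_def
  proof (intro conjI allI impI)
    fix S T
    assume "S \<in> {{}} \<union> U" "T \<in> {{}} \<union> U"
    then show "S \<inter> T \<in> {{}} \<union> U" using Int_closed by auto
  next
    fix K :: "'a set set"
    assume "\<forall>S\<in>K. S \<in> {{}} \<union> U"
    then show "\<Union>K \<in> {{}} \<union> U" using Union_closed by blast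
  qed
  moreover have "\<Union>({{}} \<union> U) = X"
    using sub X by blast
  ultimately have "topology_on X ({{}} \<union> U)"
    unfolding topology_on_def by blast
  moreover have "(S \<in> {{}} \<union> U) \<noteq> (X - S \<in> {{}} \<union> U)"
    if "S \<subseteq> X" "S \<noteq> {}" "S \<noteq> X" for S
    using that compl[of S] Int_closed[of S "X - S"] empty by auto
  ultimately show ?thesis
    unfolding connected_door_topology_def by blast
qed

theorem theorem2:
  fixes X :: "'a set" and f :: "'a set \<Rightarrow> complex" and z1 z2 :: complex
  assumes three: "\<exists>a b c. a \<in> X \<and> b \<in> X \<and> c \<in> X \<and> a \<noteq> b \<and> a \<noteq> c \<and> b \<noteq> c"
    and neq: "z1 \<noteq> z2"
    and surj: "f ` {A. A \<subseteq> X \<and> A \<noteq> {}} = {z1, z2}"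
    and add: "\<And>A B. A \<subseteq> X \<Longrightarrow> B \<subseteq> X \<Longrightarrow> A \<noteq> {} \<Longrightarrow> B \<noteq> {} \<Longrightarrow> A \<inter> B = {}
                \<Longrightarrow> f A + f B = f (A \<union> B)"
  shows "0 \<in> {z1, z2} \<and>
         ultrafilter_on X {A. A \<subseteq> X \<and> A \<noteq> {} \<and> f A = f X} \<and>
         connected_door_topology X ({{}} \<union> {A. A \<subseteq> X \<and> A \<noteq> {} \<and> f A = f X})"
proof -
  have additive: "nonempty_additive X f"
    unfolding nonempty_additive_def by (simp add: add)
  obtain a b c where abc: "a \<in> X" "b \<in> X" "c \<in> X" "a \<noteq> b" "a \<noteq> c" "b \<noteq> c"
    using three by blast
  have zero: "0 \<in> {z1, z2}"
    by (rule nonempty_additive_two_valued_contains_zero[OF additive abc equalityD1[OF surj] neq])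
  then obtain w where w: "{z1, z2} = {0, w}" "w \<noteq> 0"
    using neq by auto
  have range: "f ` {A. A \<subseteq> X \<and> A \<noteq> {}} = {0, w}"
    using surj w(1) by simp
  have uf: "ultrafilter_on X {A. A \<subseteq> X \<and> A \<noteq> {} \<and> f A = f X}"
    using ultrafilter_on_two_valued[OF additive range w(2)] by simp
  show ?thesis
    using zero uf ultrafilter_on_imp_connected_door_topology[OF uf] by (intro conjI)
qed

end
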